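(* Let $\mathcal{H}$, $\mathcal{F}$, $v_f$ and the greedy scheme be as in the context, with constant $c\ge 1$ and non-negative convex penalty $w$, and let $f^\star$ be any element of the Hilbert space. Then for every $m\ge 1$, $$\|f^\star-f_m\|^2+w(v_m)\le \inf_{f\in\mathcal{F}}\Big\{\|f^\star-f\|^2+w(cv_f)+\frac{4b_f}{m}\Big\},\qquad b_f=c^2v_f^2+2v_f\|f^\star\|(c+1)-\|f\|^2 .$$ Moreover, $$\|f^\star-f_m\|^2+w(v_m)\le \inf_{f\in\mathcal{F}}\inf_{\delta>0}\Big\{(1+\delta)\|f^\star-f\|^2+w(cv_f)+\frac{4(1+\delta)\delta^{-1}(c+1)^2v_f^2}{m}\Big\},$$ and consequently $$\|f^\star-f_m\|^2+w(v_m)\le \inf_{f\in\mathcal{F}}\Big\{\Big(\|f^\star-f\|+\frac{2(c+1)v_f}{\sqrt m}\Big)^2+w(cv_f)\Big\}.$$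
   Context: Let $(\mathcal{V},\langle\cdot,\cdot\rangle)$ be a real Hilbert space with norm $\|\cdot\|$ (in the paper, $L^2(P)$ for a probability measure $P$ on $[-1,1]^d$). Let $\mathcal{H}\subset\mathcal{V}$ be a dictionary with $\|h\|\le 1$ for all $h\in\mathcal{H}$, $\mathcal{H}=-\mathcal{H}$ and $0\in\mathcal{H}$. Let $\mathcal{F}$ be the set of finite combinations $f=\sum_{h\in\mathcal{H}}\beta_h h$ with $\beta_h\ge 0$, and for $f\in\mathcal{F}$ let $v_f=\inf\{\sum_h\beta_h : f=\sum_h\beta_h h,\ \beta_h\ge0\}$. Let $w:\mathbb{R}\to[0,\infty)$ be convex and $c\ge1$. Greedy scheme: $f_0=0$, $v_0=0$. For $m=1,2,\dots$: choose $h_m\in\mathcal{H}$ with $\langle h_m,f^\star-f_{m-1}\rangle\ge \frac1c\sup_{h\in\mathcal{H}}\langle h,f^\star-f_{m-1}\rangle$; then choose $\alpha_m\in[0,1]$ and $\beta_{m,m}\ge0$ attaining $\inf_{\alpha\in[0,1],\beta\ge0}\big[\|f^\star-(1-\alpha)f_{m-1}-\beta h_m\|^2+w((1-\alpha)v_{m-1}+\beta)\big]$, and set $f_m=(1-\alpha_m)f_{m-1}+\beta_{m,m}h_m$, $v_m=(1-\alpha_m)v_{m-1}+\beta_{m,m}$. *)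

theory Defs
  imports "HOL-Analysis.Analysis"
begin

definition dict_reps :: "'a::real_vector set \<Rightarrow> 'a \<Rightarrow> ('a set \<times> ('a \<Rightarrow> real)) set" where
  "dict_reps H f = {(S, beta). finite S \<and> S \<subseteq> H \<and> (\<forall>h\<in>S. beta h \<ge> 0)
                      \<and> f = (\<Sum>h\<in>S. beta h *\<^sub>R h)}"

definition dict_cone :: "'a::real_vector set \<Rightarrow> 'a set" where
  "dict_cone H = {f. dict_reps H f \<noteq> {}}"

definition var_norm :: "'a::real_vector set \<Rightarrow> 'a \<Rightarrow> real" where
  "var_norm H f = Inf ((\<lambda>(S, beta). \<Sum>h\<in>S. beta h) ` dict_reps H f)"

end

theory Submission
  imports Defs
begin

text \<open>Fix a comparison element g of the cone, with variation V, and let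
  e m = \<parallel>f* - f m\<parallel>^2 + w (v m). Step m is at least as good as the choice \<alpha> = t, \<beta> = t c V
  for any t \<in> [0,1]; convexity of w takes care of the penalty, and the greedy choice of h m gives
  \<langle>f* - f (m-1), g - c V h m\<rangle> \<le> 0, which disposes of the cross term. The result is a recursion
  e m - A \<le> (1 - t) (e (m-1) - A) + t^2 B, and t = 2/(m+1) yields e m - A \<le> 4 B / m.
  The first two bounds differ only in how \<parallel>f* - c V h m\<parallel>^2 is estimated; the third follows
  from the second by optimising over \<delta>.\<close>

lemma norm_lincomb_sq:
  fixes r y :: "'a::real_inner"
  shows "(norm (p *\<^sub>R r + q *\<^sub>R y))\<^sup>2 = p\<^sup>2 * (norm r)\<^sup>2 + 2 * p * q * inner r y + q\<^sup>2 * (norm y)\<^sup>2"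
  unfolding power2_norm_eq_inner
  by (simp add: inner_add_left inner_add_right inner_commute power2_eq_square algebra_simps)

lemma norm_add_sq_le_weighted:
  fixes u z :: "'a::real_inner"
  assumes "d > 0"
  shows "(norm (u + z))\<^sup>2 \<le> (1 + d) * (norm u)\<^sup>2 + (1 + 1 / d) * (norm z)\<^sup>2"
proof -
  have "2 * inner u z \<le> 2 * (norm u * norm z)"
    using norm_cauchy_schwarz[of u z] by simp
  also have "\<dots> \<le> d * (norm u)\<^sup>2 + (norm z)\<^sup>2 / d"
  proof -
    have "0 \<le> (d * norm u - norm z)\<^sup>2 / d" using assms by simp
    also have "\<dots> = d * (norm u)\<^sup>2 + (norm z)\<^sup>2 / d - 2 * (norm u * norm z)"
      using assms by (simp add: field_simps power2_eq_square)
    finally show ?thesis by simp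
  qed
  finally show ?thesis
    using norm_lincomb_sq[of 1 u 1 z] by (simp add: algebra_simps add_divide_distrib)
qed

lemma norm_convex_comb_sq_le:
  fixes r u y :: "'a::real_inner"
  assumes "inner r y \<le> inner r u" and "0 \<le> a" and "a \<le> 1"
  shows "(norm ((1 - a) *\<^sub>R r + a *\<^sub>R y))\<^sup>2
           \<le> (1 - a) * (norm r)\<^sup>2 + a * (1 - a) * (norm u)\<^sup>2 + a\<^sup>2 * (norm y)\<^sup>2"
proof -
  have "2 * inner r u \<le> (norm r)\<^sup>2 + (norm u)\<^sup>2"
    using norm_lincomb_sq[of 1 r "-1" u] zero_le_power2[of "norm (r - u)"] by simp
  with assms(1) have "2 * inner r y \<le> (norm r)\<^sup>2 + (norm u)\<^sup>2"
    by linarith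
  then have "a * (1 - a) * (2 * inner r y) \<le> a * (1 - a) * ((norm r)\<^sup>2 + (norm u)\<^sup>2)"
    using assms(2,3) by (intro mult_left_mono) auto
  then show ?thesis
    unfolding norm_lincomb_sq by (simp add: power2_eq_square algebra_simps)
qed

lemma four_div_bound_of_recursion:
  fixes x :: "nat \<Rightarrow> real"
  assumes step: "\<And>m t. m \<ge> 1 \<Longrightarrow> 0 \<le> t \<Longrightarrow> t \<le> 1 \<Longrightarrow> x m \<le> (1 - t) * x (m - 1) + t\<^sup>2 * B"
    and B: "B \<ge> 0" and "m \<ge> 1"
  shows "x m \<le> 4 * B / real m"
  using \<open>m \<ge> 1\<close>
proof (induction m rule: nat_induct_at_least)
  case base
  then show ?case using step[of 1 1] B by simp
next
  case (Suc n)
  define t where "t = 2 / (real n + 1)"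
  have "x (Suc n) \<le> (1 - t) * x n + t\<^sup>2 * B"
    using step[of "Suc n" t] Suc.hyps unfolding t_def by simp
  also have "\<dots> \<le> (1 - t) * (4 * B / real n) + t\<^sup>2 * B"
    using Suc unfolding t_def by (intro add_right_mono mult_left_mono) auto
  also have "\<dots> = ((1 - t) * (4 / real n) + t\<^sup>2) * B"
    by (simp add: algebra_simps)
  also have "(1 - t) * (4 / real n) + t\<^sup>2 \<le> 4 / (real n + 1)"
  proof -
    define a b where "a = 1 / real n" and "b = 1 / (real n + 1)"
    have ab: "a - b = a * b" and "0 \<le> a"
      unfolding a_def b_def using Suc.hyps by (simp_all add: field_simps)
    have "4 * b - ((1 - 2 * b) * (4 * a) + (2 * b)\<^sup>2) = 4 * a * b\<^sup>2"
      using ab by algebra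
    moreover have "0 \<le> 4 * a * b\<^sup>2"
      using \<open>0 \<le> a\<close> by simp
    ultimately have "(1 - 2 * b) * (4 * a) + (2 * b)\<^sup>2 \<le> 4 * b"
      by linarith
    then show ?thesis unfolding a_def b_def t_def by simp
  qed
  finally show ?case
    using B by (simp add: mult_right_mono add.commute)
qed

lemma SUP_inner_upper:
  fixes H :: "'a::real_inner set"
  assumes "\<forall>g\<in>H. norm g \<le> 1" and "h \<in> H"
  shows "inner h r \<le> (SUP g\<in>H. inner g r)"
proof (rule cSUP_upper[OF \<open>h \<in> H\<close>], rule bdd_aboveI2)
  fix g assume "g \<in> H"
  have "inner g r \<le> norm g * norm r" by (rule norm_cauchy_schwarz)
  also have "\<dots> \<le> norm r"
    using assms(1) \<open>g \<in> H\<close> by (simp add: mult_left_le_one_le)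
  finally show "inner g r \<le> norm r" .
qed

lemma dict_reps_sum_bounds:
  fixes H :: "'a::real_inner set"
  assumes H_norm: "\<forall>g\<in>H. norm g \<le> 1" and rep: "(S, beta) \<in> dict_reps H f"
  shows "0 \<le> (\<Sum>h\<in>S. beta h)"
    and "norm f \<le> (\<Sum>h\<in>S. beta h)"
    and "inner f r \<le> (\<Sum>h\<in>S. beta h) * (SUP g\<in>H. inner g r)"
proof -
  have SH: "S \<subseteq> H" and beta: "\<forall>h\<in>S. beta h \<ge> 0" and f: "f = (\<Sum>h\<in>S. beta h *\<^sub>R h)"
    using rep unfolding dict_reps_def by auto
  show "0 \<le> (\<Sum>h\<in>S. beta h)"
    using beta by (simp add: sum_nonneg)
  have "norm f \<le> (\<Sum>h\<in>S. norm (beta h *\<^sub>R h))"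
    unfolding f by (rule norm_sum)
  also have "\<dots> \<le> (\<Sum>h\<in>S. beta h)"
    using SH beta H_norm by (intro sum_mono) (auto simp: mult_left_le)
  finally show "norm f \<le> (\<Sum>h\<in>S. beta h)" .
  have "inner f r = (\<Sum>h\<in>S. beta h * inner h r)"
    unfolding f by (simp add: inner_sum_left)
  also have "\<dots> \<le> (\<Sum>h\<in>S. beta h * (SUP g\<in>H. inner g r))"
    using SH beta SUP_inner_upper[OF H_norm] by (intro sum_mono mult_left_mono) auto
  finally show "inner f r \<le> (\<Sum>h\<in>S. beta h) * (SUP g\<in>H. inner g r)"
    by (simp add: sum_distrib_right)
qed

lemma le_var_norm:
  assumes "f \<in> dict_cone H" and "\<And>S beta. (S, beta) \<in> dict_reps H f \<Longrightarrow> x \<le> (\<Sum>h\<in>S. beta h)"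
  shows "x \<le> var_norm H f"
  using assms unfolding var_norm_def dict_cone_def by (intro cInf_greatest) auto

lemma var_norm_nonneg:
  fixes H :: "'a::real_inner set"
  assumes "\<forall>g\<in>H. norm g \<le> 1" and "f \<in> dict_cone H"
  shows "0 \<le> var_norm H f"
  using assms dict_reps_sum_bounds(1) by (blast intro: le_var_norm)

lemma norm_le_var_norm:
  fixes H :: "'a::real_inner set"
  assumes "\<forall>g\<in>H. norm g \<le> 1" and "f \<in> dict_cone H"
  shows "norm f \<le> var_norm H f"
  using assms dict_reps_sum_bounds(2) by (blast intro: le_var_norm)

lemma inner_le_var_norm_mult_SUP:
  fixes H :: "'a::real_inner set"
  assumes H_norm: "\<forall>g\<in>H. norm g \<le> 1" and "0 \<in> H" and f: "f \<in> dict_cone H"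
  shows "inner f r \<le> var_norm H f * (SUP g\<in>H. inner g r)"
proof -
  let ?s = "SUP g\<in>H. inner g r"
  have "0 \<le> ?s"
    using SUP_inner_upper[OF H_norm \<open>0 \<in> H\<close>, of r] by simp
  then consider "?s = 0" | "?s > 0" by linarith
  then show ?thesis
  proof cases
    case 1
    obtain S beta where "(S, beta) \<in> dict_reps H f"
      using f unfolding dict_cone_def by auto
    then show ?thesis
      using dict_reps_sum_bounds(3)[OF H_norm, of S beta f r] 1 by simp
  next
    case 2
    have "inner f r / ?s \<le> var_norm H f"
      using f dict_reps_sum_bounds(3)[OF H_norm] 2
      by (intro le_var_norm) (auto simp: pos_divide_le_eq)
    then show ?thesis
      using 2 by (simp add: pos_divide_le_eq mult.commute)
  qed
qed

lemma le_sum_sq_of_le_weighted: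
  fixes E d s :: real
  assumes le: "\<And>\<delta>. \<delta> > 0 \<Longrightarrow> E \<le> (1 + \<delta>) * d\<^sup>2 + (1 + 1 / \<delta>) * s\<^sup>2"
    and "0 \<le> d" "0 \<le> s"
  shows "E \<le> (d + s)\<^sup>2"
proof (rule tendsto_lowerbound)
  show "((\<lambda>\<epsilon>. (d + s + 2 * \<epsilon>)\<^sup>2) \<longlongrightarrow> (d + s)\<^sup>2) (at_right 0)"
    by (rule tendsto_eq_intros refl | simp)+
  show "\<forall>\<^sub>F \<epsilon> in at_right 0. E \<le> (d + s + 2 * \<epsilon>)\<^sup>2"
  proof (rule eventually_at_rightI[of 0 1])
    fix \<epsilon> :: real assume "\<epsilon> \<in> {0<..<1}"
    then have \<epsilon>: "\<epsilon> > 0" by simp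
    \<comment> \<open>\<open>\<delta> = s / d\<close> is optimal; the shift by \<open>\<epsilon>\<close> copes with \<open>d = 0\<close> or \<open>s = 0\<close>.\<close>
    define \<delta> where "\<delta> = (s + \<epsilon>) / (d + \<epsilon>)"
    have \<delta>: "\<delta> > 0" unfolding \<delta>_def using \<epsilon> assms(2,3) by simp
    have "E \<le> (1 + \<delta>) * d\<^sup>2 + (1 + 1 / \<delta>) * s\<^sup>2" using le[OF \<delta>] .
    also have "\<dots> \<le> (1 + \<delta>) * (d + \<epsilon>)\<^sup>2 + (1 + 1 / \<delta>) * (s + \<epsilon>)\<^sup>2"
      using \<delta> \<epsilon> assms(2,3) by (intro add_mono mult_left_mono power_mono) auto
    also have "\<dots> = (d + s + 2 * \<epsilon>)\<^sup>2"
    proof -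
      have "(1 + q / p) * p\<^sup>2 + (1 + 1 / (q / p)) * q\<^sup>2 = (p + q)\<^sup>2"
        if "p > 0" "q > 0" for p q :: real
        using that by (simp add: field_simps power2_eq_square)
      from this[of "d + \<epsilon>" "s + \<epsilon>"] show ?thesis
        unfolding \<delta>_def using \<epsilon> assms(2,3) by (simp add: algebra_simps)
    qed
    finally show "E \<le> (d + s + 2 * \<epsilon>)\<^sup>2" .
  qed simp
qed simp

lemma norm_diff_scaleR_sq_le:
  fixes x g h :: "'a::real_inner"
  assumes "norm h \<le> 1" and "norm g \<le> V" and "0 \<le> b"
  shows "(norm (x - b *\<^sub>R h))\<^sup>2 \<le> (norm (x - g))\<^sup>2 + b\<^sup>2 + 2 * (b + V) * norm x - (norm g)\<^sup>2"
proof -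
  have "norm x * norm h \<le> norm x"
    using assms(1) by (simp add: mult_left_le)
  then have "- inner x h \<le> norm x"
    using norm_cauchy_schwarz[of x "- h"] by simp
  then have "b * (- inner x h) \<le> b * norm x"
    using assms(3) by (rule mult_left_mono)
  then have xh: "- (2 * b * inner x h) \<le> 2 * b * norm x"
    by simp
  have "b\<^sup>2 * (norm h)\<^sup>2 \<le> b\<^sup>2"
    using assms(1) by (simp add: mult_left_le power_le_one)
  moreover have "inner x g \<le> V * norm x"
    using norm_cauchy_schwarz[of x g] mult_right_mono[OF assms(2) norm_ge_zero[of x]]
    by (simp add: mult.commute)
  ultimately show ?thesis
    using xh norm_lincomb_sq[of 1 x "- b" h] norm_lincomb_sq[of 1 x "- 1" g]
    by (simp add: algebra_simps)
qed

locale greedy_scheme =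
  fixes H :: "'a::real_inner set"
    and w :: "real \<Rightarrow> real" and c :: real and fstar :: 'a
    and f :: "nat \<Rightarrow> 'a" and v :: "nat \<Rightarrow> real"
    and h :: "nat \<Rightarrow> 'a" and \<alpha> :: "nat \<Rightarrow> real" and \<beta> :: "nat \<Rightarrow> real"
  assumes H_norm: "\<forall>g\<in>H. norm g \<le> 1"
    and H_zero: "0 \<in> H"
    and w_convex: "convex_on UNIV w"
    and c_ge: "c \<ge> 1"
    and h_mem: "\<And>m. m \<ge> 1 \<Longrightarrow> h m \<in> H"
    and h_greedy: "\<And>m. m \<ge> 1 \<Longrightarrow>
          inner (h m) (fstar - f (m - 1)) \<ge> (1 / c) * (SUP g\<in>H. inner g (fstar - f (m - 1)))"
    and opt: "\<And>m a b. m \<ge> 1 \<Longrightarrow> a \<in> {0..1} \<Longrightarrow> b \<ge> 0 \<Longrightarrow>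
          (norm (fstar - (1 - \<alpha> m) *\<^sub>R f (m - 1) - \<beta> m *\<^sub>R h m))\<^sup>2
            + w ((1 - \<alpha> m) * v (m - 1) + \<beta> m)
          \<le> (norm (fstar - (1 - a) *\<^sub>R f (m - 1) - b *\<^sub>R h m))\<^sup>2
            + w ((1 - a) * v (m - 1) + b)"
    and f_step: "\<And>m. m \<ge> 1 \<Longrightarrow> f m = (1 - \<alpha> m) *\<^sub>R f (m - 1) + \<beta> m *\<^sub>R h m"
    and v_step: "\<And>m. m \<ge> 1 \<Longrightarrow> v m = (1 - \<alpha> m) * v (m - 1) + \<beta> m"
begin

definition err :: "nat \<Rightarrow> real" where
  "err m = (norm (fstar - f m))\<^sup>2 + w (v m)"

lemma err_le_comparison:
  assumes m: "m \<ge> 1" and "0 \<le> a" "a \<le> 1" "0 \<le> b"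
  shows "err m \<le> (norm ((1 - a) *\<^sub>R (fstar - f (m - 1)) + a *\<^sub>R (fstar - b *\<^sub>R h m)))\<^sup>2
                   + (1 - a) * w (v (m - 1)) + a * w b"
proof -
  have "err m = (norm (fstar - (1 - \<alpha> m) *\<^sub>R f (m - 1) - \<beta> m *\<^sub>R h m))\<^sup>2
                  + w ((1 - \<alpha> m) * v (m - 1) + \<beta> m)"
    unfolding err_def f_step[OF m] v_step[OF m] by (simp add: algebra_simps)
  also have "\<dots> \<le> (norm (fstar - (1 - a) *\<^sub>R f (m - 1) - (a * b) *\<^sub>R h m))\<^sup>2
                  + w ((1 - a) * v (m - 1) + a * b)"
    using opt[OF m] assms by simp
  also have "fstar - (1 - a) *\<^sub>R f (m - 1) - (a * b) *\<^sub>R h m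
               = (1 - a) *\<^sub>R (fstar - f (m - 1)) + a *\<^sub>R (fstar - b *\<^sub>R h m)"
    by (simp add: algebra_simps)
  also have "w ((1 - a) * v (m - 1) + a * b) \<le> (1 - a) * w (v (m - 1)) + a * w b"
    using convex_onD[OF w_convex, of a "v (m - 1)" b] assms by simp
  finally show ?thesis
    by simp
qed

lemma greedy_inner_le:
  assumes g: "g \<in> dict_cone H" and m: "m \<ge> 1"
  shows "inner (fstar - f (m - 1)) (fstar - (c * var_norm H g) *\<^sub>R h m)
           \<le> inner (fstar - f (m - 1)) (fstar - g)"
proof -
  let ?r = "fstar - f (m - 1)"
  have "(SUP g\<in>H. inner g ?r) \<le> c * inner (h m) ?r"
    using h_greedy[OF m] c_ge by (simp add: field_simps)
  then have "var_norm H g * (SUP g\<in>H. inner g ?r) \<le> var_norm H g * (c * inner (h m) ?r)"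
    using var_norm_nonneg[OF H_norm g] by (rule mult_left_mono)
  then have "inner g ?r \<le> var_norm H g * (c * inner (h m) ?r)"
    using inner_le_var_norm_mult_SUP[OF H_norm H_zero g, of ?r] by linarith
  then show ?thesis
    by (simp add: inner_diff_right inner_commute algebra_simps)
qed

lemma err_le_of_comparison_bound:
  assumes g: "g \<in> dict_cone H" and D: "(norm (fstar - g))\<^sup>2 \<le> D" and B: "0 \<le> B"
    and comparison: "\<And>m. m \<ge> 1 \<Longrightarrow> (norm (fstar - (c * var_norm H g) *\<^sub>R h m))\<^sup>2 \<le> D + B"
    and "m \<ge> 1"
  shows "err m \<le> D + w (c * var_norm H g) + 4 * B / real m"
proof -
  let ?b = "c * var_norm H g"
  let ?W = "w ?b"
  have "err m - (D + ?W) \<le> 4 * B / real m"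
  proof (rule four_div_bound_of_recursion[OF _ B \<open>m \<ge> 1\<close>])
    fix k :: nat and t :: real
    assume k: "k \<ge> 1" and t: "0 \<le> t" "t \<le> 1"
    let ?r = "fstar - f (k - 1)"
    let ?y = "fstar - ?b *\<^sub>R h k"
    have b: "0 \<le> ?b"
      using c_ge var_norm_nonneg[OF H_norm g] by simp
    have "(norm ((1 - t) *\<^sub>R ?r + t *\<^sub>R ?y))\<^sup>2
            \<le> (1 - t) * (norm ?r)\<^sup>2 + t * (1 - t) * (norm (fstar - g))\<^sup>2 + t\<^sup>2 * (norm ?y)\<^sup>2"
      using norm_convex_comb_sq_le[OF greedy_inner_le[OF g k] t] .
    also have "\<dots> \<le> (1 - t) * (norm ?r)\<^sup>2 + t * (1 - t) * D + t\<^sup>2 * (D + B)"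
      using D comparison[OF k] t by (intro add_mono mult_left_mono order_refl) auto
    finally have "err k \<le> (1 - t) * (norm ?r)\<^sup>2 + t * (1 - t) * D + t\<^sup>2 * (D + B)
                          + (1 - t) * w (v (k - 1)) + t * ?W"
      using err_le_comparison[OF k t b] by linarith
    moreover have "err (k - 1) = (norm ?r)\<^sup>2 + w (v (k - 1))"
      by (simp add: err_def)
    ultimately
    show "err k - (D + ?W) \<le> (1 - t) * (err (k - 1) - (D + ?W)) + t\<^sup>2 * B"
      by (simp add: algebra_simps power2_eq_square)
  qed
  then show ?thesis by simp
qed

lemma err_bound:
  assumes g: "g \<in> dict_cone H" and "m \<ge> 1"
  shows "err m \<le> (norm (fstar - g))\<^sup>2 + w (c * var_norm H g)
           + 4 * (c\<^sup>2 * (var_norm H g)\<^sup>2 + 2 * var_norm H g * norm fstar * (c + 1)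
                  - (norm g)\<^sup>2) / real m"
proof (rule err_le_of_comparison_bound[OF g order_refl _ _ \<open>m \<ge> 1\<close>])
  let ?V = "var_norm H g"
  have V: "0 \<le> ?V" "norm g \<le> ?V"
    using var_norm_nonneg[OF H_norm g] norm_le_var_norm[OF H_norm g] .
  have "norm g \<le> c * ?V"
    using mult_right_mono[OF c_ge V(1)] V(2) by simp
  then have "(norm g)\<^sup>2 \<le> c\<^sup>2 * ?V\<^sup>2"
    by (metis norm_ge_zero power_mono power_mult_distrib)
  moreover have "0 \<le> 2 * ?V * norm fstar * (c + 1)"
    using V(1) c_ge by simp
  ultimately show "0 \<le> c\<^sup>2 * ?V\<^sup>2 + 2 * ?V * norm fstar * (c + 1) - (norm g)\<^sup>2"
    by linarith
  fix k :: nat assume "k \<ge> 1"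
  then show "(norm (fstar - (c * ?V) *\<^sub>R h k))\<^sup>2 \<le> (norm (fstar - g))\<^sup>2
               + (c\<^sup>2 * ?V\<^sup>2 + 2 * ?V * norm fstar * (c + 1) - (norm g)\<^sup>2)"
    using norm_diff_scaleR_sq_le[of "h k" g ?V "c * ?V" fstar] H_norm h_mem V c_ge
    by (simp add: algebra_simps power_mult_distrib)
qed

lemma err_bound_delta:
  assumes g: "g \<in> dict_cone H" and "\<delta> > 0" and "m \<ge> 1"
  shows "err m \<le> (1 + \<delta>) * (norm (fstar - g))\<^sup>2 + w (c * var_norm H g)
           + 4 * (1 + \<delta>) * (c + 1)\<^sup>2 * (var_norm H g)\<^sup>2 / (\<delta> * real m)"
proof -
  let ?V = "var_norm H g"
  let ?K = "(c + 1) * ?V"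
  have V: "0 \<le> ?V" "norm g \<le> ?V"
    using var_norm_nonneg[OF H_norm g] norm_le_var_norm[OF H_norm g] .
  have "err m \<le> (1 + \<delta>) * (norm (fstar - g))\<^sup>2 + w (c * ?V) + 4 * ((1 + 1 / \<delta>) * ?K\<^sup>2) / real m"
  proof (rule err_le_of_comparison_bound[OF g _ _ _ \<open>m \<ge> 1\<close>])
    show "(norm (fstar - g))\<^sup>2 \<le> (1 + \<delta>) * (norm (fstar - g))\<^sup>2"
      using \<open>\<delta> > 0\<close> by (simp add: distrib_right)
    show "0 \<le> (1 + 1 / \<delta>) * ?K\<^sup>2"
      using \<open>\<delta> > 0\<close> by simp
    fix k :: nat assume k: "k \<ge> 1"
    have "norm (g - (c * ?V) *\<^sub>R h k) \<le> norm g + norm ((c * ?V) *\<^sub>R h k)"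
      by (rule norm_triangle_ineq4)
    also have "\<dots> \<le> ?V + c * ?V"
      using V c_ge H_norm h_mem[OF k] by (intro add_mono) (auto simp: mult_left_le)
    finally have "(norm (g - (c * ?V) *\<^sub>R h k))\<^sup>2 \<le> ?K\<^sup>2"
      by (intro power_mono) (auto simp: algebra_simps)
    then have "(1 + 1 / \<delta>) * (norm (g - (c * ?V) *\<^sub>R h k))\<^sup>2 \<le> (1 + 1 / \<delta>) * ?K\<^sup>2"
      using \<open>\<delta> > 0\<close> by (intro mult_left_mono) auto
    then show "(norm (fstar - (c * ?V) *\<^sub>R h k))\<^sup>2 \<le> (1 + \<delta>) * (norm (fstar - g))\<^sup>2 + (1 + 1 / \<delta>) * ?K\<^sup>2"
      using norm_add_sq_le_weighted[OF \<open>\<delta> > 0\<close>, of "fstar - g" "g - (c * ?V) *\<^sub>R h k"]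
      by simp
  qed
  also have "4 * ((1 + 1 / \<delta>) * ?K\<^sup>2) / real m = 4 * (1 + \<delta>) * (c + 1)\<^sup>2 * ?V\<^sup>2 / (\<delta> * real m)"
    using \<open>\<delta> > 0\<close> \<open>m \<ge> 1\<close>
    by (simp add: field_simps power_mult_distrib) (simp add: power2_eq_square algebra_simps)
  finally show ?thesis .
qed

lemma err_bound_sqrt:
  assumes g: "g \<in> dict_cone H" and "m \<ge> 1"
  shows "err m \<le> (norm (fstar - g) + 2 * (c + 1) * var_norm H g / sqrt (real m))\<^sup>2
                   + w (c * var_norm H g)"
proof -
  let ?s = "2 * (c + 1) * var_norm H g / sqrt (real m)"
  have "err m - w (c * var_norm H g) \<le> (norm (fstar - g) + ?s)\<^sup>2"
  proof (rule le_sum_sq_of_le_weighted)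
    fix \<delta> :: real assume "\<delta> > 0"
    have "(1 + 1 / \<delta>) * ?s\<^sup>2 = 4 * (1 + \<delta>) * (c + 1)\<^sup>2 * (var_norm H g)\<^sup>2 / (\<delta> * real m)"
      using \<open>\<delta> > 0\<close> \<open>m \<ge> 1\<close>
      by (simp add: field_simps power_mult_distrib) (simp add: power2_eq_square algebra_simps)
    then show "err m - w (c * var_norm H g) \<le> (1 + \<delta>) * (norm (fstar - g))\<^sup>2 + (1 + 1 / \<delta>) * ?s\<^sup>2"
      using err_bound_delta[OF g \<open>\<delta> > 0\<close> \<open>m \<ge> 1\<close>] by simp
  qed (use c_ge var_norm_nonneg[OF H_norm g] in auto)
  then show ?thesis by simp
qed

end

theorem theorem1:
  fixes H :: "'a::{real_inner, complete_space} set"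
    and w :: "real \<Rightarrow> real"
    and c :: real
    and fstar :: 'a
    and f :: "nat \<Rightarrow> 'a" and v :: "nat \<Rightarrow> real"
    and h :: "nat \<Rightarrow> 'a" and \<alpha> :: "nat \<Rightarrow> real" and \<beta> :: "nat \<Rightarrow> real"
  assumes H_norm: "\<forall>g\<in>H. norm g \<le> 1"
    and H_sym: "uminus ` H = H"
    and H_zero: "0 \<in> H"
    and w_convex: "convex_on UNIV w"
    and w_nonneg: "\<forall>x. w x \<ge> 0"
    and c_ge: "c \<ge> 1"
    and f0: "f 0 = 0" and v0: "v 0 = 0"
    and h_mem: "\<And>m. m \<ge> 1 \<Longrightarrow> h m \<in> H"
    and h_greedy: "\<And>m. m \<ge> 1 \<Longrightarrow>
          inner (h m) (fstar - f (m - 1)) \<ge> (1 / c) * (SUP g\<in>H. inner g (fstar - f (m - 1)))"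
    and \<alpha>_range: "\<And>m. m \<ge> 1 \<Longrightarrow> \<alpha> m \<in> {0..1}"
    and \<beta>_nonneg: "\<And>m. m \<ge> 1 \<Longrightarrow> \<beta> m \<ge> 0"
    and opt: "\<And>m a b. m \<ge> 1 \<Longrightarrow> a \<in> {0..1} \<Longrightarrow> b \<ge> 0 \<Longrightarrow>
          (norm (fstar - (1 - \<alpha> m) *\<^sub>R f (m - 1) - \<beta> m *\<^sub>R h m))\<^sup>2
            + w ((1 - \<alpha> m) * v (m - 1) + \<beta> m)
          \<le> (norm (fstar - (1 - a) *\<^sub>R f (m - 1) - b *\<^sub>R h m))\<^sup>2
            + w ((1 - a) * v (m - 1) + b)"
    and f_step: "\<And>m. m \<ge> 1 \<Longrightarrow> f m = (1 - \<alpha> m) *\<^sub>R f (m - 1) + \<beta> m *\<^sub>R h m"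
    and v_step: "\<And>m. m \<ge> 1 \<Longrightarrow> v m = (1 - \<alpha> m) * v (m - 1) + \<beta> m"
  shows "\<forall>m\<ge>1.
     (\<forall>g\<in>dict_cone H.
        (norm (fstar - f m))\<^sup>2 + w (v m)
          \<le> (norm (fstar - g))\<^sup>2 + w (c * var_norm H g)
             + 4 * (c\<^sup>2 * (var_norm H g)\<^sup>2 + 2 * var_norm H g * norm fstar * (c + 1)
                    - (norm g)\<^sup>2) / real m)
   \<and> (\<forall>g\<in>dict_cone H. \<forall>\<delta>>0.
        (norm (fstar - f m))\<^sup>2 + w (v m)
          \<le> (1 + \<delta>) * (norm (fstar - g))\<^sup>2 + w (c * var_norm H g)
             + 4 * (1 + \<delta>) * (c + 1)\<^sup>2 * (var_norm H g)\<^sup>2 / (\<delta> * real m))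
   \<and> (\<forall>g\<in>dict_cone H.
        (norm (fstar - f m))\<^sup>2 + w (v m)
          \<le> (norm (fstar - g) + 2 * (c + 1) * var_norm H g / sqrt (real m))\<^sup>2
             + w (c * var_norm H g))"
proof -
  interpret greedy_scheme H w c fstar f v h \<alpha> \<beta>
    by unfold_locales (fact H_norm H_zero w_convex c_ge h_mem h_greedy opt f_step v_step)+
  show ?thesis
    using err_bound err_bound_delta err_bound_sqrt unfolding err_def by blast
qed

end
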